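(* Let $f=z^4+f_2z^2+f_3z+f_4\in\mathbb{R}[x,y,z]$ with $f_j\in\mathbb{R}[x,y]$ homogeneous of degree $j$, such that $f$ is strictly positive definite and $f-z^4$ is psd. Assume that $f_2$ is not a square, $f_2\nmid f_3$, and $4f_2f_4-f_3^2$ is square-free. Let $\xi_0,\eta_0\in\mathbb{R}[x,y]$ be forms of degrees $2$ and $3$ with $\eta_0^2+f_2\xi_0^2=4f_2f_4-f_3^2$. Then there exist $\epsilon>0$ and families of binary forms $\xi^{(t)}$ of degree $2$ and $\eta^{(t)}$ of degree $3$, depending continuously on $t\in(-\epsilon,\epsilon)$, with $(\xi^{(0)},\eta^{(0)})=(\xi_0,\eta_0)$, such that for all $|t|<\epsilon$: $(\eta^{(t)})^2+f_3^2=(f_2-t\xi^{(t)})(4f_4-(\xi^{(t)})^2)$, and $f_2-t\xi^{(t)}$ and $4f_4-(\xi^{(t)})^2$ are psd.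
   Context: psd: taking only nonnegative values on real points; strictly positive definite: taking positive values at all nonzero real points. Continuity refers to the coefficients of the forms. *)

theory Defs
  imports "HOL-Analysis.Analysis" "HOL-Computational_Algebra.Computational_Algebra"
begin

text \<open>Bivariate real polynomials R[x,y] are represented as real poly poly = (R[x])[y]:
  the outer variable is y, the coefficients are polynomials in x.\<close>

type_synonym bipoly = "real poly poly"

definition ev2 :: "bipoly \<Rightarrow> real \<Rightarrow> real \<Rightarrow> real" where
  "ev2 p x y = poly (poly p [:y:]) x"

definition bcoeff :: "bipoly \<Rightarrow> nat \<Rightarrow> nat \<Rightarrow> real" where
  "bcoeff p k i = coeff (coeff p i) k"

definition form_of_deg :: "nat \<Rightarrow> bipoly \<Rightarrow> bool" where
  "form_of_deg j p \<longleftrightarrow> (\<forall>k i. bcoeff p k i \<noteq> 0 \<longrightarrow> k + i = j)"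

definition psd2 :: "bipoly \<Rightarrow> bool" where
  "psd2 p \<longleftrightarrow> (\<forall>x y. ev2 p x y \<ge> 0)"

definition bconst :: "real \<Rightarrow> bipoly" where
  "bconst c = [:[:c:]:]"

definition evf :: "bipoly \<Rightarrow> bipoly \<Rightarrow> bipoly \<Rightarrow> real \<Rightarrow> real \<Rightarrow> real \<Rightarrow> real" where
  "evf f2 f3 f4 x y z = z^4 + ev2 f2 x y * z^2 + ev2 f3 x y * z + ev2 f4 x y"

end

theory Submission
  imports Defs "HOL-Computational_Algebra.Field_as_Ring"
begin

text \<open>Since \<open>f - z\<^sup>4\<close> is psd, so is \<open>f\<^sub>2\<close>; not being a square, it is positive definite and
  hence irreducible. The required identity is equivalent to
  \<open>\<eta>\<^sup>2 + f\<^sub>2 \<xi>\<^sup>2 + t \<xi> (4 f\<^sub>4 - \<xi>\<^sup>2) = 4 f\<^sub>2 f\<^sub>4 - f\<^sub>3\<^sup>2\<close>, i.e. to seven equations (the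
  coefficients of a sextic) in the seven coefficients of \<open>(\<xi>, \<eta>)\<close>, depending on the parameter \<open>t\<close>.
  At \<open>t = 0\<close> they are solved by \<open>(\<xi>\<^sub>0, \<eta>\<^sub>0)\<close>, and the linearized equation
  \<open>\<eta>\<^sub>0 B + f\<^sub>2 \<xi>\<^sub>0 A = 0\<close> has only the trivial solution: squarefreeness of
  \<open>4 f\<^sub>2 f\<^sub>4 - f\<^sub>3\<^sup>2\<close> and \<open>f\<^sub>2 \<nmid> f\<^sub>3\<close> make \<open>\<eta>\<^sub>0\<close> coprime to \<open>f\<^sub>2 \<xi>\<^sub>0\<close>, while
  \<open>deg A < deg \<eta>\<^sub>0\<close>. The implicit function theorem then yields a continuous curve of solutions.
  For small \<open>t\<close> the form \<open>f\<^sub>2 - t \<xi>\<close> stays positive definite, and \<open>4 f\<^sub>4 - \<xi>\<^sup>2\<close> is psd because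
  its product with \<open>f\<^sub>2 - t \<xi>\<close> is the sum of squares \<open>\<eta>\<^sup>2 + f\<^sub>3\<^sup>2\<close>.\<close>

section \<open>Binary forms\<close>

lemma ev2_add [simp]: "ev2 (p + q) x y = ev2 p x y + ev2 q x y"
  by (simp add: ev2_def)

lemma ev2_diff [simp]: "ev2 (p - q) x y = ev2 p x y - ev2 q x y"
  by (simp add: ev2_def)

lemma ev2_mult [simp]: "ev2 (p * q) x y = ev2 p x y * ev2 q x y"
  by (simp add: ev2_def)

lemma ev2_power [simp]: "ev2 (p ^ n) x y = ev2 p x y ^ n"
  by (induct n) (simp_all add: ev2_def)

lemma ev2_bconst [simp]: "ev2 (bconst c) x y = c"
  by (simp add: ev2_def bconst_def)

lemma ev2_0 [simp]: "ev2 0 x y = 0"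
  by (simp add: ev2_def)

lemma ev2_1 [simp]: "ev2 1 x y = 1"
  by (simp add: ev2_def)

lemma ev2_altdef: "ev2 p x y = (\<Sum>i\<le>degree p. poly (coeff p i) x * y ^ i)"
  unfolding ev2_def poly_altdef[of p] by (simp add: poly_sum)

lemma ev2_eq_sum_upto:
  assumes "degree p \<le> n"
  shows "ev2 p x y = (\<Sum>i\<le>n. poly (coeff p i) x * y ^ i)"
proof -
  have "(\<Sum>i\<le>n. poly (coeff p i) x * y ^ i) = (\<Sum>i\<le>degree p. poly (coeff p i) x * y ^ i)"
    by (rule sum.mono_neutral_right) (use assms in \<open>auto simp: coeff_eq_0\<close>)
  then show ?thesis
    by (simp add: ev2_altdef)
qed

lemma ev2_map_poly: "ev2 p x y = poly (map_poly (\<lambda>c. poly c x) p) y"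
  by (induct p rule: pCons_induct) (simp_all add: ev2_def map_poly_pCons)

lemma ev2_not_identically_0:
  assumes "p \<noteq> 0"
  obtains x y where "ev2 p x y \<noteq> 0"
proof -
  obtain i where "coeff p i \<noteq> 0"
    using assms by (metis leading_coeff_0_iff)
  then obtain x where "poly (coeff p i) x \<noteq> 0"
    using poly_all_0_iff_0 by blast
  then have "map_poly (\<lambda>c. poly c x) p \<noteq> 0"
    by (metis coeff_0 coeff_map_poly poly_0)
  then obtain y where "poly (map_poly (\<lambda>c. poly c x) p) y \<noteq> 0"
    using poly_all_0_iff_0 by blast
  then show ?thesis
    using that by (simp add: ev2_map_poly)
qed

lemma ev2_inject:
  assumes "\<And>x y. ev2 p x y = ev2 q x y"
  shows "p = q"
  using ev2_not_identically_0[of "p - q"] assms by force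

lemma continuous_on_ev2_ray: "continuous_on S (\<lambda>s::real. ev2 p (s * x) (s * y))"
  unfolding ev2_altdef by (intro continuous_intros)

lemma coeff_form:
  assumes "form_of_deg j p"
  shows "coeff p i = (if i \<le> j then monom (bcoeff p (j - i) i) (j - i) else 0)"
proof (rule poly_eqI)
  fix k
  have "coeff (coeff p i) k \<noteq> 0 \<Longrightarrow> k + i = j"
    using assms by (auto simp: form_of_deg_def bcoeff_def)
  then show "coeff (coeff p i) k = coeff (if i \<le> j then monom (bcoeff p (j - i) i) (j - i) else 0) k"
    by (cases "coeff (coeff p i) k = 0") (auto simp: bcoeff_def)
qed

lemma degree_form_le: "form_of_deg j p \<Longrightarrow> degree p \<le> j"
  by (rule degree_le) (simp add: coeff_form)

lemma ev2_form:
  assumes "form_of_deg j p"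
  shows "ev2 p x y = (\<Sum>i\<le>j. bcoeff p (j - i) i * x ^ (j - i) * y ^ i)"
  by (subst ev2_eq_sum_upto[OF degree_form_le[OF assms]])
    (simp add: coeff_form[OF assms] poly_monom)

lemma ev2_form_scale:
  assumes "form_of_deg j p"
  shows "ev2 p (s * x) (s * y) = s ^ j * ev2 p x y"
proof -
  have "bcoeff p (j - i) i * (s * x) ^ (j - i) * (s * y) ^ i
      = s ^ j * (bcoeff p (j - i) i * x ^ (j - i) * y ^ i)" if "i \<le> j" for i
  proof -
    have "s ^ j = s ^ (j - i) * s ^ i"
      using that by (simp flip: power_add)
    then show ?thesis
      by (simp add: power_mult_distrib)
  qed
  then show ?thesis
    unfolding ev2_form[OF assms] sum_distrib_left by (intro sum.cong) auto
qed

lemma ev2_form_origin: "form_of_deg j p \<Longrightarrow> 0 < j \<Longrightarrow> ev2 p 0 0 = 0"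
  using ev2_form_scale[of j p 0 0 0] by (simp add: zero_power)

text \<open>The dehomogenization \<open>p(1, y)\<close> is a univariate polynomial of degree at most \<open>j\<close>.\<close>

lemma form_eq_0_if_vanishes:
  assumes "form_of_deg j p" and "\<And>i. i \<le> j \<Longrightarrow> ev2 p 1 (real i) = 0"
  shows "p = 0"
proof -
  define q :: "real poly" where "q = (\<Sum>i\<le>j. monom (bcoeff p (j - i) i) i)"
  have coeff_q: "coeff q i = (if i \<le> j then bcoeff p (j - i) i else 0)" for i
    by (simp add: q_def coeff_sum)
  have "degree q \<le> j"
    by (rule degree_le) (simp add: coeff_q)
  have "q = 0"
  proof (rule ccontr)
    assume "q \<noteq> 0"
    have "real ` {..j} \<subseteq> {x. poly q x = 0}"
      using assms(2) by (auto simp: q_def poly_sum poly_monom ev2_form[OF assms(1)])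
    then have "card (real ` {..j}) \<le> card {x. poly q x = 0}"
      by (intro card_mono poly_roots_finite \<open>q \<noteq> 0\<close>)
    also have "\<dots> \<le> j"
      using card_poly_roots_bound[OF \<open>q \<noteq> 0\<close>] \<open>degree q \<le> j\<close> by linarith
    finally show False
      by (simp add: card_image)
  qed
  then show "p = 0"
    by (intro poly_eqI) (metis coeff_0 coeff_q coeff_form[OF assms(1)] monom_eq_0)
qed

lemma form_not_unit: "form_of_deg j p \<Longrightarrow> 0 < j \<Longrightarrow> \<not> p dvd 1"
  by (metis dvdE ev2_1 ev2_form_origin ev2_mult mult_zero_left zero_neq_one)

lemma form_add: "form_of_deg j p \<Longrightarrow> form_of_deg j q \<Longrightarrow> form_of_deg j (p + q)"
  unfolding form_of_deg_def bcoeff_def by (metis add.right_neutral coeff_add)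

lemma form_diff: "form_of_deg j p \<Longrightarrow> form_of_deg j q \<Longrightarrow> form_of_deg j (p - q)"
  unfolding form_of_deg_def bcoeff_def by (metis coeff_diff diff_self)

lemma bcoeff_mult:
  "bcoeff (p * q) k i = (\<Sum>i1\<le>i. \<Sum>k1\<le>k. bcoeff p k1 i1 * bcoeff q (k - k1) (i - i1))"
  by (simp add: bcoeff_def coeff_mult coeff_sum)

lemma form_mult:
  assumes "form_of_deg m p" and "form_of_deg n q"
  shows "form_of_deg (m + n) (p * q)"
  unfolding form_of_deg_def
proof (intro allI impI)
  fix k i
  assume "bcoeff (p * q) k i \<noteq> 0"
  then obtain i1 k1 where "i1 \<le> i" "k1 \<le> k" "bcoeff p k1 i1 \<noteq> 0" "bcoeff q (k - k1) (i - i1) \<noteq> 0"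
    unfolding bcoeff_mult by (metis (no_types, lifting) atMost_iff mult_eq_0_iff sum.neutral)
  with assms show "k + i = m + n"
    unfolding form_of_deg_def by fastforce
qed

lemma form_bconst: "form_of_deg 0 (bconst c)"
  by (auto simp: form_of_deg_def bcoeff_def bconst_def coeff_pCons split: nat.splits)

lemma form_bconst_mult: "form_of_deg j p \<Longrightarrow> form_of_deg j (bconst c * p)"
  using form_mult[OF form_bconst] by fastforce

lemma form_power2: "form_of_deg j p \<Longrightarrow> form_of_deg (2 * j) (p\<^sup>2)"
  by (metis form_mult mult_2 power2_eq_square)

definition form_of_coeffs :: "nat \<Rightarrow> (nat \<Rightarrow> real) \<Rightarrow> bipoly" where
  "form_of_coeffs j c = (\<Sum>i\<le>j. monom (monom (c i) (j - i)) i)"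

lemma bcoeff_form_of_coeffs:
  "bcoeff (form_of_coeffs j c) k i = (if i \<le> j \<and> k = j - i then c i else 0)"
  by (auto simp: form_of_coeffs_def bcoeff_def coeff_sum)

lemma form_form_of_coeffs: "form_of_deg j (form_of_coeffs j c)"
  unfolding form_of_deg_def bcoeff_form_of_coeffs by auto

lemma ev2_form_of_coeffs: "ev2 (form_of_coeffs j c) x y = (\<Sum>i\<le>j. c i * x ^ (j - i) * y ^ i)"
  unfolding ev2_form[OF form_form_of_coeffs] bcoeff_form_of_coeffs by simp

lemma form_of_coeffs_cong: "(\<And>i. i \<le> j \<Longrightarrow> c i = d i) \<Longrightarrow> form_of_coeffs j c = form_of_coeffs j d"
  unfolding form_of_coeffs_def by (rule sum.cong) auto

lemma form_of_coeffs_bcoeff: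
  assumes "form_of_deg j p"
  shows "form_of_coeffs j (\<lambda>i. bcoeff p (j - i) i) = p"
  by (rule poly_eqI) (simp add: form_of_coeffs_def coeff_sum coeff_form[OF assms])

lemma form_of_coeffs_eq_0_iff: "form_of_coeffs j c = 0 \<longleftrightarrow> (\<forall>i\<le>j. c i = 0)"
proof
  assume "form_of_coeffs j c = 0"
  show "\<forall>i\<le>j. c i = 0"
  proof (intro allI impI)
    fix i
    assume "i \<le> j"
    then have "c i = bcoeff (form_of_coeffs j c) (j - i) i"
      by (simp add: bcoeff_form_of_coeffs)
    then show "c i = 0"
      using \<open>form_of_coeffs j c = 0\<close> by (simp add: bcoeff_def)
  qed
qed (simp add: form_of_coeffs_def)

lemma continuous_on_bcoeff_form_of_coeffs:
  "(\<And>i. continuous_on S (\<lambda>t. c t i)) \<Longrightarrow> continuous_on S (\<lambda>t. bcoeff (form_of_coeffs j (c t)) k i)"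
  unfolding bcoeff_form_of_coeffs by (cases "i \<le> j \<and> k = j - i") auto

text \<open>Along a ray, \<open>A = P r\<close> gives \<open>A(x,y) = s^(n-m) P(x,y) r(s x, s y)\<close> for \<open>s \<noteq> 0\<close>;
  letting \<open>s \<rightarrow> 0\<close> forces \<open>A(x,y) = 0\<close> wherever \<open>P(x,y) \<noteq> 0\<close>.\<close>

lemma form_dvd_eq_0_if_higher_degree:
  assumes A: "form_of_deg m A" and P: "form_of_deg n P" and "m < n" "P \<noteq> 0" "P dvd A"
  shows "A = 0"
proof (rule ccontr)
  assume "A \<noteq> 0"
  with assms obtain x y where "ev2 (P * A) x y \<noteq> 0"
    using ev2_not_identically_0[of "P * A"] by auto
  then have Pxy: "ev2 P x y \<noteq> 0" and Axy: "ev2 A x y \<noteq> 0"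
    by auto
  obtain r where r: "A = P * r"
    using \<open>P dvd A\<close> by blast
  define h where "h s = s ^ (n - m) * ev2 r (s * x) (s * y)" for s :: real
  have "continuous_on UNIV h"
    unfolding h_def by (intro continuous_intros continuous_on_ev2_ray)
  then have "(h \<longlongrightarrow> h 0) (at 0)"
    by (simp add: continuous_on_def)
  moreover have "\<forall>\<^sub>F s in at 0. h s = ev2 A x y / ev2 P x y"
    unfolding eventually_at_filter
  proof (intro always_eventually allI impI)
    fix s :: real
    assume "s \<noteq> 0"
    have "s ^ m * ev2 A x y = ev2 P (s * x) (s * y) * ev2 r (s * x) (s * y)"
      using ev2_form_scale[OF A, of s x y] r by simp
    also have "\<dots> = s ^ m * (ev2 P x y * h s)"
      using ev2_form_scale[OF P, of s x y] \<open>m < n\<close>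
      by (simp add: h_def power_add[symmetric])
    finally show "h s = ev2 A x y / ev2 P x y"
      using \<open>s \<noteq> 0\<close> Pxy by (simp add: h_def field_simps)
  qed
  then have "(h \<longlongrightarrow> ev2 A x y / ev2 P x y) (at 0)"
    by (rule tendsto_eventually)
  ultimately have "h 0 = ev2 A x y / ev2 P x y"
    by (rule tendsto_unique[rotated]) simp
  then show False
    using \<open>m < n\<close> Axy Pxy by (simp add: h_def zero_power)
qed

section \<open>Binary quadratic forms\<close>

lemma nonneg_quadratic_leading_coeff_nonneg:
  fixes a b c :: real
  assumes "\<And>z. 0 \<le> a * z\<^sup>2 + b * z + c"
  shows "0 \<le> a"
proof (rule ccontr)
  assume "\<not> 0 \<le> a"
  define z where "z = (\<bar>b\<bar> + \<bar>c\<bar> + 1) / (- a) + 1"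
  have "0 < (\<bar>b\<bar> + \<bar>c\<bar> + 1) / (- a)"
    using \<open>\<not> 0 \<le> a\<close> by (intro divide_pos_pos) auto
  then have "1 \<le> z"
    by (simp add: z_def)
  have "a * z + \<bar>b\<bar> + \<bar>c\<bar> < 0"
    using \<open>\<not> 0 \<le> a\<close> by (simp add: z_def field_simps)
  have "a * z\<^sup>2 + b * z + c \<le> z * (a * z + \<bar>b\<bar> + \<bar>c\<bar>)"
  proof -
    have "b * z \<le> \<bar>b\<bar> * z" "c \<le> \<bar>c\<bar> * z"
      using \<open>1 \<le> z\<close> mult_left_mono[of 1 z "\<bar>c\<bar>"] by (simp_all add: mult_right_mono)
    then show ?thesis
      by (simp add: power2_eq_square algebra_simps)
  qed
  also have "\<dots> < 0"
    using \<open>a * z + \<bar>b\<bar> + \<bar>c\<bar> < 0\<close> \<open>1 \<le> z\<close> by (simp add: mult_pos_neg)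
  finally show False
    using assms[of z] by linarith
qed

lemma nonneg_quadratic_form_discriminant:
  fixes a b c :: real
  assumes nonneg: "\<And>x y. 0 \<le> a * x\<^sup>2 + b * x * y + c * y\<^sup>2"
  shows "0 \<le> a" "0 \<le> c" "b\<^sup>2 \<le> 4 * a * c"
proof -
  show "0 \<le> a" "0 \<le> c"
    using nonneg[of 1 0] nonneg[of 0 1] by simp_all
  show "b\<^sup>2 \<le> 4 * a * c"
  proof (cases "c = 0")
    case True
    have "b = 0"
      using nonneg[of 1 "- (a + 1) / b"] True by (cases "b = 0") (simp_all add: field_simps)
    then show ?thesis
      using True by simp
  next
    case False
    have "0 \<le> c * (4 * a * c - b\<^sup>2)"
      using nonneg[of "2 * c" "- b"] by (simp add: power2_eq_square algebra_simps)
    then show ?thesis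
      using False \<open>0 \<le> c\<close> by (simp add: zero_le_mult_iff)
  qed
qed

text \<open>The explicit constant comes from completing the square in
  \<open>4 (a - m) (a x\<^sup>2 + b x y + c y\<^sup>2 - m (x\<^sup>2 + y\<^sup>2))\<close>.\<close>

lemma pos_def_quadratic_form_coercive:
  fixes a b c :: real
  assumes "0 < a" "0 < c" "b\<^sup>2 < 4 * a * c"
  obtains m where "0 < m" "\<And>x y. m * (x\<^sup>2 + y\<^sup>2) \<le> a * x\<^sup>2 + b * x * y + c * y\<^sup>2"
proof
  define m where "m = (4 * a * c - b\<^sup>2) / (4 * (a + c))"
  show "0 < m"
    using assms by (simp add: m_def)
  have m_eq: "4 * m * (a + c) = 4 * a * c - b\<^sup>2"
    using assms by (simp add: m_def field_simps)
  have "a * (4 * (a + c)) = 4 * a * c + 4 * (a * a)"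
    by (simp add: algebra_simps)
  moreover have "m * (4 * (a + c)) = 4 * a * c - b\<^sup>2"
    using m_eq by (simp add: algebra_simps)
  moreover have "0 < a * a"
    using assms(1) by simp
  ultimately have "m * (4 * (a + c)) < a * (4 * (a + c))"
    using zero_le_power2[of b] by linarith
  then have "0 < a - m"
    using assms by simp
  fix x y :: real
  have "4 * (a - m) * (a * x\<^sup>2 + b * x * y + c * y\<^sup>2 - m * (x\<^sup>2 + y\<^sup>2))
      = (2 * (a - m) * x + b * y)\<^sup>2 + 4 * m\<^sup>2 * y\<^sup>2 + (4 * a * c - b\<^sup>2 - 4 * m * (a + c)) * y\<^sup>2"
    by (simp add: power2_eq_square algebra_simps)
  then have "0 \<le> 4 * (a - m) * (a * x\<^sup>2 + b * x * y + c * y\<^sup>2 - m * (x\<^sup>2 + y\<^sup>2))"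
    using m_eq by simp
  then show "m * (x\<^sup>2 + y\<^sup>2) \<le> a * x\<^sup>2 + b * x * y + c * y\<^sup>2"
    using \<open>0 < a - m\<close> by (simp add: zero_le_mult_iff)
qed

lemma ev2_form2:
  "form_of_deg 2 q \<Longrightarrow> ev2 q x y = bcoeff q 2 0 * x\<^sup>2 + bcoeff q 1 1 * x * y + bcoeff q 0 2 * y\<^sup>2"
  by (simp add: ev2_form numeral_2_eq_2 atMost_Suc)

lemma abs_ev2_form2_le:
  assumes "form_of_deg 2 q"
  shows "\<bar>ev2 q x y\<bar> \<le> (\<bar>bcoeff q 2 0\<bar> + \<bar>bcoeff q 1 1\<bar> + \<bar>bcoeff q 0 2\<bar>) * (x\<^sup>2 + y\<^sup>2)"
proof -
  define a b c where "a = bcoeff q 2 0" and "b = bcoeff q 1 1" and "c = bcoeff q 0 2"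
  have "2 * (\<bar>x\<bar> * \<bar>y\<bar>) \<le> x\<^sup>2 + y\<^sup>2"
    using sum_squares_bound[of "\<bar>x\<bar>" "\<bar>y\<bar>"] by simp
  moreover have "0 \<le> \<bar>x\<bar> * \<bar>y\<bar>"
    by simp
  ultimately have "\<bar>x\<bar> * \<bar>y\<bar> \<le> x\<^sup>2 + y\<^sup>2"
    by linarith
  then have "\<bar>b * x * y\<bar> \<le> \<bar>b\<bar> * (x\<^sup>2 + y\<^sup>2)"
    unfolding mult.assoc abs_mult by (rule mult_left_mono) simp
  moreover have "\<bar>a * x\<^sup>2\<bar> \<le> \<bar>a\<bar> * (x\<^sup>2 + y\<^sup>2)" "\<bar>c * y\<^sup>2\<bar> \<le> \<bar>c\<bar> * (x\<^sup>2 + y\<^sup>2)"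
    unfolding abs_mult abs_power2 by (simp_all add: mult_left_mono)
  moreover have "\<bar>a * x\<^sup>2 + b * x * y + c * y\<^sup>2\<bar> \<le> \<bar>a * x\<^sup>2\<bar> + \<bar>b * x * y\<bar> + \<bar>c * y\<^sup>2\<bar>"
    by (rule order_trans[OF abs_triangle_ineq add_right_mono[OF abs_triangle_ineq]])
  ultimately show ?thesis
    unfolding ev2_form2[OF assms] a_def[symmetric] b_def[symmetric] c_def[symmetric] distrib_right
    by linarith
qed

lemma form2_eq_square_if_discriminant_0:
  assumes q: "form_of_deg 2 q"
    and "0 \<le> bcoeff q 2 0" "0 \<le> bcoeff q 0 2" "(bcoeff q 1 1)\<^sup>2 = 4 * bcoeff q 2 0 * bcoeff q 0 2"
  shows "\<exists>g. q = g\<^sup>2"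
proof -
  define a b c where "a = bcoeff q 2 0" and "b = bcoeff q 1 1" and "c = bcoeff q 0 2"
  define s :: real where "s = (if 0 \<le> b then 1 else -1)"
  have "a * c = (b / 2)\<^sup>2"
    using assms by (simp add: a_def b_def c_def power_divide)
  then have "sqrt a * sqrt c = \<bar>b\<bar> / 2"
    by (simp flip: real_sqrt_mult)
  then have "2 * s * (sqrt a * sqrt c) = b"
    by (auto simp: s_def abs_if)
  moreover have "sqrt a * sqrt a = a" "sqrt c * sqrt c = c" "s * s = 1"
    using assms by (simp_all add: a_def c_def s_def)
  moreover have "(sqrt a * x + s * sqrt c * y)\<^sup>2 = (sqrt a * sqrt a) * x\<^sup>2
      + (2 * s * (sqrt a * sqrt c)) * x * y + (s * s) * (sqrt c * sqrt c) * y\<^sup>2" for x y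
    by (simp add: power2_eq_square algebra_simps)
  ultimately have "(sqrt a * x + s * sqrt c * y)\<^sup>2 = a * x\<^sup>2 + b * x * y + c * y\<^sup>2" for x y
    by simp
  then have "ev2 q x y = (sqrt a * x + s * sqrt c * y)\<^sup>2" for x y
    by (simp add: ev2_form2[OF q] a_def b_def c_def)
  then have "q = (form_of_coeffs 1 (\<lambda>i. if i = 0 then sqrt a else s * sqrt c))\<^sup>2"
    by (intro ev2_inject) (simp add: ev2_form_of_coeffs eval_nat_numeral atMost_Suc add.commute)
  then show ?thesis ..
qed

lemma form2_coercive:
  assumes q: "form_of_deg 2 q" and "psd2 q" and nonsquare: "\<not> (\<exists>g. q = g\<^sup>2)"
  obtains m where "0 < m" "\<And>x y. m * (x\<^sup>2 + y\<^sup>2) \<le> ev2 q x y"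
proof -
  define a b c where "a = bcoeff q 2 0" and "b = bcoeff q 1 1" and "c = bcoeff q 0 2"
  have ev2_q: "ev2 q x y = a * x\<^sup>2 + b * x * y + c * y\<^sup>2" for x y
    by (simp add: ev2_form2[OF q] a_def b_def c_def)
  have "0 \<le> a" "0 \<le> c" "b\<^sup>2 \<le> 4 * a * c"
    using nonneg_quadratic_form_discriminant[of a b c] \<open>psd2 q\<close> by (simp_all add: psd2_def ev2_q)
  moreover have "b\<^sup>2 \<noteq> 4 * a * c"
    using form2_eq_square_if_discriminant_0[OF q] nonsquare \<open>0 \<le> a\<close> \<open>0 \<le> c\<close>
    by (auto simp: a_def b_def c_def)
  ultimately have "0 < a" "0 < c" "b\<^sup>2 < 4 * a * c"
    using zero_le_power2[of b] by (auto simp: less_le)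
  then obtain m where "0 < m" "\<And>x y. m * (x\<^sup>2 + y\<^sup>2) \<le> a * x\<^sup>2 + b * x * y + c * y\<^sup>2"
    by (rule pos_def_quadratic_form_coercive) blast
  then show ?thesis
    by (intro that) (simp_all add: ev2_q)
qed

lemma is_unit_poly_poly_if_constant:
  fixes p :: "'a :: field poly poly"
  assumes "degree p = 0" "p \<noteq> 0" "degree (coeff p 0) = 0"
  shows "p dvd 1"
proof -
  have "coeff p 0 \<noteq> 0"
    using assms(1,2) by (metis degree_0_id pCons_0_0)
  then have "coeff p 0 dvd 1"
    using assms(3) is_unit_iff_degree by blast
  then show ?thesis
    using is_unit_poly_iff degree_0_id[OF assms(1)] by metis
qed

lemma form2_irreducible:
  assumes q: "form_of_deg 2 q" and pos: "\<And>x y. (x, y) \<noteq> (0, 0) \<Longrightarrow> 0 < ev2 q x y"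
  shows "irreducible q"
proof (rule irreducibleI)
  have "0 < ev2 q 0 1"
    using pos by simp
  then show "q \<noteq> 0"
    by auto
  show "\<not> q dvd 1"
    by (rule form_not_unit[OF q]) simp
  fix p r
  assume qpr: "q = p * r"
  then have "p \<noteq> 0" "r \<noteq> 0"
    using \<open>q \<noteq> 0\<close> by auto
  have "coeff q 2 = [:ev2 q 0 1:]"
    by (simp add: coeff_form[OF q] ev2_form2[OF q] monom_0)
  then have "degree q = 2"
    using \<open>0 < ev2 q 0 1\<close> degree_form_le[OF q] le_degree[of q 2] by auto
  then have "lead_coeff p * lead_coeff r = [:ev2 q 0 1:]"
    using \<open>coeff q 2 = _\<close> qpr lead_coeff_mult[of p r] by argo
  then have "degree (lead_coeff p) = 0" "degree (lead_coeff r) = 0"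
    using degree_mult_eq[of "lead_coeff p" "lead_coeff r"] \<open>p \<noteq> 0\<close> \<open>r \<noteq> 0\<close> by auto
  moreover have "degree p + degree r = 2"
    using qpr degree_mult_eq[OF \<open>p \<noteq> 0\<close> \<open>r \<noteq> 0\<close>] \<open>degree q = 2\<close> by simp
  text \<open>A linear factor would give a real zero of \<open>q(1, y)\<close>.\<close>
  moreover have "degree p \<noteq> 1"
  proof
    assume "degree p = 1"
    define u \<alpha> where "u = coeff (coeff p 1) 0" and "\<alpha> = poly (coeff p 0) 1"
    have "coeff p 1 = [:u:]"
      using \<open>degree (lead_coeff p) = 0\<close> \<open>degree p = 1\<close> degree_0_id u_def by metis
    moreover have "u \<noteq> 0"
      using \<open>p \<noteq> 0\<close> \<open>degree p = 1\<close> calculation leading_coeff_0_iff[of p] by auto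
    ultimately have "ev2 p 1 (- \<alpha> / u) = 0"
      by (simp add: ev2_altdef \<open>degree p = 1\<close> \<alpha>_def)
    then show False
      using pos[of 1 "- \<alpha> / u"] qpr by simp
  qed
  ultimately have "degree p = 0 \<and> degree (lead_coeff p) = 0 \<or> degree r = 0 \<and> degree (lead_coeff r) = 0"
    by linarith
  then show "p dvd 1 \<or> r dvd 1"
    using is_unit_poly_poly_if_constant[of p] is_unit_poly_poly_if_constant[of r] \<open>p \<noteq> 0\<close> \<open>r \<noteq> 0\<close>
    by auto
qed

section \<open>The linearized equation\<close>

lemma coprime_if_squarefree_sum:
  fixes a b c :: "'a :: algebraic_semidom"
  assumes "squarefree (a\<^sup>2 + b * c\<^sup>2)"
  shows "coprime a c"
proof (rule coprimeI)
  fix d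
  assume "d dvd a" "d dvd c"
  then have "d\<^sup>2 dvd a\<^sup>2 + b * c\<^sup>2"
    by (intro dvd_add dvd_mult dvd_power_same)
  then show "is_unit d"
    using assms by (simp add: squarefree_def)
qed

lemma prime_not_dvd_if_sum_eq:
  fixes p a b c g :: "'a :: idom"
  assumes "prime_elem p" "\<not> p dvd c" "a\<^sup>2 + p * b\<^sup>2 = p * g - c\<^sup>2"
  shows "\<not> p dvd a"
proof
  assume "p dvd a"
  have "c\<^sup>2 = p * (g - b\<^sup>2) - a\<^sup>2"
    using assms(3) by (simp add: algebra_simps)
  also have "p dvd \<dots>"
    using \<open>p dvd a\<close> by (simp add: power2_eq_square)
  finally show False
    using assms(1,2) prime_elem_dvd_power by blast
qed

lemma form_syzygy_trivial:
  assumes "coprime e g" "e \<noteq> 0" "form_of_deg n e" "form_of_deg m a" "m < n"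
    and "e * b + g * a = 0"
  shows "a = 0" "b = 0"
proof -
  have "e dvd g * a"
    using assms(6) by (metis add.inverse_unique dvd_minus_iff dvd_triv_left)
  then have "e dvd a"
    using assms(1) coprime_dvd_mult_right_iff by blast
  then show "a = 0"
    using form_dvd_eq_0_if_higher_degree[OF assms(4,3,5,2)] by simp
  then show "b = 0"
    using assms(2,6) by simp
qed

text \<open>The linearization at \<open>t = 0\<close> of the identity sought in the theorem has trivial kernel:
  this is where the arithmetic hypotheses on \<open>f\<^sub>2\<close>, \<open>f\<^sub>3\<close> and \<open>4 f\<^sub>2 f\<^sub>4 - f\<^sub>3\<^sup>2\<close> are used.\<close>

lemma linearization_kernel_trivial:
  assumes prime: "prime_elem f2" and ndvd: "\<not> f2 dvd f3"
    and sqf: "squarefree (bconst 4 * f2 * f4 - f3\<^sup>2)"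
    and \<xi>0: "form_of_deg 2 \<xi>0" and \<eta>0: "form_of_deg 3 \<eta>0"
    and eq: "\<eta>0\<^sup>2 + f2 * \<xi>0\<^sup>2 = bconst 4 * f2 * f4 - f3\<^sup>2"
    and A: "form_of_deg 2 A" and kernel: "\<eta>0 * B + f2 * \<xi>0 * A = 0"
  shows "A = 0" "B = 0"
proof -
  have "coprime \<eta>0 \<xi>0"
    using coprime_if_squarefree_sum sqf eq by metis
  moreover have "coprime \<eta>0 f2"
    using prime_not_dvd_if_sum_eq[OF prime ndvd, of \<eta>0 \<xi>0 "bconst 4 * f4"] eq
      prime_elem_imp_coprime[OF prime] by (simp add: coprime_commute mult.assoc mult.left_commute)
  ultimately have "coprime \<eta>0 (f2 * \<xi>0)"
    by simp
  moreover have "\<eta>0 \<noteq> 0"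
    using \<open>coprime \<eta>0 \<xi>0\<close> form_not_unit[OF \<xi>0] by auto
  ultimately show "A = 0" "B = 0"
    using form_syzygy_trivial[OF _ _ \<eta>0 A _ kernel] by simp_all
qed

section \<open>A curve of solutions\<close>

lemma implicit_function_curve:
  fixes \<Phi> :: "'a::euclidean_space \<times> real \<Rightarrow> 'a \<times> real"
    and \<Phi>' :: "'a \<times> real \<Rightarrow> ('a \<times> real) \<Rightarrow>\<^sub>L ('a \<times> real)"
  assumes der: "\<And>z. (\<Phi> has_derivative blinfun_apply (\<Phi>' z)) (at z)"
    and cont: "continuous_on UNIV \<Phi>'"
    and snd: "\<And>z. snd (\<Phi> z) = snd z"
    and zero: "\<Phi> (x0, 0) = (0, 0)"
    and inj: "\<And>h. blinfun_apply (\<Phi>' (x0, 0)) h = 0 \<Longrightarrow> h = 0"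
  obtains \<delta> x where "0 < \<delta>" "continuous_on {-\<delta><..<\<delta>} x" "x 0 = x0"
    "\<And>t. \<bar>t\<bar> < \<delta> \<Longrightarrow> fst (\<Phi> (x t, t)) = 0"
proof -
  let ?L = "blinfun_apply (\<Phi>' (x0, 0))"
  have "linear ?L"
    by (simp add: blinfun.bounded_linear_right bounded_linear.linear)
  moreover have "inj ?L"
  proof (rule injI)
    fix a b
    assume "?L a = ?L b"
    then have "?L (a - b) = 0"
      using linear_diff[OF \<open>linear ?L\<close>] by simp
    then show "a = b"
      using inj by fastforce
  qed
  ultimately obtain g where "linear g" "g \<circ> ?L = id"
    using linear_injective_left_inverse by blast
  have inverse: "Blinfun g o\<^sub>L \<Phi>' (x0, 0) = id_blinfun"
  proof (rule blinfun_eqI)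
    fix h
    have "g (?L h) = h"
      using \<open>g \<circ> ?L = id\<close> by (metis comp_apply id_apply)
    then show "blinfun_apply (Blinfun g o\<^sub>L \<Phi>' (x0, 0)) h = blinfun_apply id_blinfun h"
      using \<open>linear g\<close> by (simp add: bounded_linear_Blinfun_apply linear_conv_bounded_linear)
  qed
  obtain U V G where "(x0, 0) \<in> U" "open V" "\<Phi> (x0, 0) \<in> V" "homeomorphism U V \<Phi> G"
    by (rule inverse_function_theorem[OF open_UNIV der cont UNIV_I inverse]) blast
  then have \<Phi>G: "\<Phi> (G y) = y" if "y \<in> V" for y
    using that by (simp add: homeomorphism_def)
  have "G (0, 0) = (x0, 0)" "continuous_on V G"
    using \<open>homeomorphism U V \<Phi> G\<close> \<open>(x0, 0) \<in> U\<close> zero by (auto simp: homeomorphism_def)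
  obtain \<delta> where "0 < \<delta>" "ball (0, 0) \<delta> \<subseteq> V"
    using \<open>open V\<close> \<open>\<Phi> (x0, 0) \<in> V\<close> zero open_contains_ball_eq by metis
  then have inV: "(0, t) \<in> V" if "\<bar>t\<bar> < \<delta>" for t
    using that by (auto simp: dist_Pair_Pair)
  show ?thesis
  proof
    show "0 < \<delta>"
      by fact
    have "continuous_on {-\<delta><..<\<delta>} (\<lambda>t. G (0, t))"
      by (rule continuous_on_compose2[OF \<open>continuous_on V G\<close>])
        (auto simp: inV abs_less_iff intro: continuous_on_Pair continuous_on_id)
    then show "continuous_on {-\<delta><..<\<delta>} (\<lambda>t. fst (G (0, t)))"
      by (rule continuous_on_fst)
    show "fst (G (0, 0)) = x0"
      using \<open>G (0, 0) = (x0, 0)\<close> by simp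
    fix t :: real
    assume "\<bar>t\<bar> < \<delta>"
    then have "\<Phi> (G (0, t)) = (0, t)"
      by (simp add: \<Phi>G inV)
    moreover have "G (0, t) = (fst (G (0, t)), t)"
      using snd[of "G (0, t)"] calculation by (simp add: prod_eq_iff)
    ultimately show "fst (\<Phi> (fst (G (0, t)), t)) = 0"
      by simp
  qed
qed

text \<open>Coefficient vectors of a pair \<open>(\<xi>, \<eta>)\<close> of binary forms of degrees 2 and 3, each listed
  by increasing power of \<open>y\<close>.\<close>

type_synonym coeffs = "(real \<times> real \<times> real) \<times> (real \<times> real \<times> real \<times> real)"

definition xi_coeff :: "coeffs \<Rightarrow> nat \<Rightarrow> real" where
  "xi_coeff v i = (case fst v of (c0, c1, c2) \<Rightarrow> if i = 0 then c0 else if i = 1 then c1 else c2)"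

definition eta_coeff :: "coeffs \<Rightarrow> nat \<Rightarrow> real" where
  "eta_coeff v i = (case snd v of (c0, c1, c2, c3) \<Rightarrow>
     if i = 0 then c0 else if i = 1 then c1 else if i = 2 then c2 else c3)"

definition xi_form :: "coeffs \<Rightarrow> bipoly" where
  "xi_form v = form_of_coeffs 2 (xi_coeff v)"

definition eta_form :: "coeffs \<Rightarrow> bipoly" where
  "eta_form v = form_of_coeffs 3 (eta_coeff v)"

definition coeffs_of :: "bipoly \<Rightarrow> bipoly \<Rightarrow> coeffs" where
  "coeffs_of \<xi> \<eta> = ((bcoeff \<xi> 2 0, bcoeff \<xi> 1 1, bcoeff \<xi> 0 2),
     (bcoeff \<eta> 3 0, bcoeff \<eta> 2 1, bcoeff \<eta> 1 2, bcoeff \<eta> 0 3))"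

lemma xi_form_coeffs_of: "form_of_deg 2 \<xi> \<Longrightarrow> xi_form (coeffs_of \<xi> \<eta>) = \<xi>"
  unfolding xi_form_def
proof (subst (2) form_of_coeffs_bcoeff[symmetric], assumption, rule form_of_coeffs_cong)
  fix i :: nat
  assume "i \<le> 2"
  then consider "i = 0" | "i = 1" | "i = 2"
    by linarith
  then show "xi_coeff (coeffs_of \<xi> \<eta>) i = bcoeff \<xi> (2 - i) i"
    by cases (simp_all add: xi_coeff_def coeffs_of_def)
qed

lemma eta_form_coeffs_of: "form_of_deg 3 \<eta> \<Longrightarrow> eta_form (coeffs_of \<xi> \<eta>) = \<eta>"
  unfolding eta_form_def
proof (subst (2) form_of_coeffs_bcoeff[symmetric], assumption, rule form_of_coeffs_cong)
  fix i :: nat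
  assume "i \<le> 3"
  then consider "i = 0" | "i = 1" | "i = 2" | "i = 3"
    by linarith
  then show "eta_coeff (coeffs_of \<xi> \<eta>) i = bcoeff \<eta> (3 - i) i"
    by cases (simp_all add: eta_coeff_def coeffs_of_def)
qed

lemma form_xi_form: "form_of_deg 2 (xi_form v)"
  by (simp add: xi_form_def form_form_of_coeffs)

lemma form_eta_form: "form_of_deg 3 (eta_form v)"
  by (simp add: eta_form_def form_form_of_coeffs)

lemma coeffs_eq_0_iff: "v = 0 \<longleftrightarrow> xi_form v = 0 \<and> eta_form v = 0"
proof -
  have "(\<forall>i\<le>2. xi_coeff v i = 0) \<longleftrightarrow> fst v = 0"
    by (auto simp: xi_coeff_def numeral_2_eq_2 le_Suc_eq zero_prod_def split: prod.splits)
  moreover have "(\<forall>i\<le>3. eta_coeff v i = 0) \<longleftrightarrow> snd v = 0"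
    by (auto simp: eta_coeff_def numeral_3_eq_3 le_Suc_eq zero_prod_def split: prod.splits)
  ultimately show ?thesis
    by (simp add: xi_form_def eta_form_def form_of_coeffs_eq_0_iff prod_eq_iff)
qed

lemma continuous_on_xi_coeff: "continuous_on S x \<Longrightarrow> continuous_on S (\<lambda>t. xi_coeff (x t) i)"
  unfolding xi_coeff_def
  by (cases "i = 0"; cases "i = 1")
    (simp_all add: case_prod_beta continuous_on_fst continuous_on_snd)

lemma continuous_on_eta_coeff: "continuous_on S x \<Longrightarrow> continuous_on S (\<lambda>t. eta_coeff (x t) i)"
  unfolding eta_coeff_def
  by (cases "i = 0"; cases "i = 1"; cases "i = 2")
    (simp_all add: case_prod_beta continuous_on_fst continuous_on_snd)

lemma continuous_on_bcoeff_xi_form: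
  "continuous_on S x \<Longrightarrow> continuous_on S (\<lambda>t. bcoeff (xi_form (x t)) k i)"
  unfolding xi_form_def by (intro continuous_on_bcoeff_form_of_coeffs continuous_on_xi_coeff)

lemma continuous_on_bcoeff_eta_form:
  "continuous_on S x \<Longrightarrow> continuous_on S (\<lambda>t. bcoeff (eta_form (x t)) k i)"
  unfolding eta_form_def by (intro continuous_on_bcoeff_form_of_coeffs continuous_on_eta_coeff)

definition xi_at :: "coeffs \<Rightarrow> real \<Rightarrow> real" where
  "xi_at v y = (case fst v of (c0, c1, c2) \<Rightarrow> c0 + c1 * y + c2 * y\<^sup>2)"

definition eta_at :: "coeffs \<Rightarrow> real \<Rightarrow> real" where
  "eta_at v y = (case snd v of (c0, c1, c2, c3) \<Rightarrow> c0 + c1 * y + c2 * y\<^sup>2 + c3 * y ^ 3)"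

lemma ev2_xi_form: "ev2 (xi_form v) 1 y = xi_at v y"
  by (simp add: xi_form_def ev2_form_of_coeffs numeral_2_eq_2 atMost_Suc xi_coeff_def xi_at_def
      split: prod.splits)

lemma ev2_eta_form: "ev2 (eta_form v) 1 y = eta_at v y"
  by (simp add: eta_form_def ev2_form_of_coeffs numeral_3_eq_3 atMost_Suc eta_coeff_def eta_at_def
      power2_eq_square split: prod.splits)

lemma xi_at_has_derivative: "((\<lambda>z. xi_at (fst z) y) has_derivative (\<lambda>h. xi_at (fst h) y)) (at z)"
  unfolding xi_at_def case_prod_beta by (auto intro!: derivative_eq_intros)

lemma eta_at_has_derivative: "((\<lambda>z. eta_at (fst z) y) has_derivative (\<lambda>h. eta_at (fst h) y)) (at z)"
  unfolding eta_at_def case_prod_beta by (auto intro!: derivative_eq_intros)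

text \<open>\<open>residual f2 f3 f4 (v, t)\<close> is the dehomogenization \<open>y \<mapsto> R(1, y)\<close> of the sextic
  \<open>R = \<eta>\<^sup>2 + f\<^sub>3\<^sup>2 - (f\<^sub>2 - t \<xi>) (4 f\<^sub>4 - \<xi>\<^sup>2)\<close>, where \<open>(\<xi>, \<eta>)\<close> has coefficient vector \<open>v\<close>.\<close>

definition residual :: "bipoly \<Rightarrow> bipoly \<Rightarrow> bipoly \<Rightarrow> coeffs \<times> real \<Rightarrow> real \<Rightarrow> real" where
  "residual f2 f3 f4 z y = (eta_at (fst z) y)\<^sup>2 + ev2 f2 1 y * (xi_at (fst z) y)\<^sup>2
     + snd z * (4 * xi_at (fst z) y * ev2 f4 1 y - (xi_at (fst z) y) ^ 3)
     - ev2 (bconst 4 * f2 * f4 - f3\<^sup>2) 1 y"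

definition residual_deriv :: "bipoly \<Rightarrow> bipoly \<Rightarrow> coeffs \<times> real \<Rightarrow> coeffs \<times> real \<Rightarrow> real \<Rightarrow> real" where
  "residual_deriv f2 f4 z h y = 2 * eta_at (fst z) y * eta_at (fst h) y
     + 2 * ev2 f2 1 y * xi_at (fst z) y * xi_at (fst h) y
     + snd h * (4 * xi_at (fst z) y * ev2 f4 1 y - (xi_at (fst z) y) ^ 3)
     + snd z * (4 * xi_at (fst h) y * ev2 f4 1 y - 3 * (xi_at (fst z) y)\<^sup>2 * xi_at (fst h) y)"

lemma ev2_residual:
  "ev2 ((eta_form v)\<^sup>2 + f3\<^sup>2 - (f2 - bconst t * xi_form v) * (bconst 4 * f4 - (xi_form v)\<^sup>2)) 1 y
    = residual f2 f3 f4 (v, t) y"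
  by (simp add: residual_def ev2_xi_form ev2_eta_form power2_eq_square power3_eq_cube algebra_simps)

lemma residual_has_derivative:
  "((\<lambda>z. residual f2 f3 f4 z y) has_derivative (\<lambda>h. residual_deriv f2 f4 z h y)) (at z)"
  unfolding residual_def
  by (rule derivative_eq_intros xi_at_has_derivative eta_at_has_derivative refl)+
    (simp add: residual_deriv_def fun_eq_iff power2_eq_square power3_eq_cube algebra_simps)

text \<open>Sampling at \<open>y = 0, \<dots>, 6\<close>. A sextic is determined by these seven values, and there are seven
  unknown coefficients in \<open>(\<xi>, \<eta>)\<close>, so the residual becomes a map between spaces of equal
  dimension, to which the implicit function theorem applies.\<close>

definition samples :: "(real \<Rightarrow> real) \<Rightarrow> coeffs" where
  "samples g = ((g 0, g 1, g 2), (g 3, g 4, g 5, g 6))"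

lemma samples_eq_0_iff: "samples g = 0 \<longleftrightarrow> (\<forall>j\<le>6. g (real j) = 0)"
proof -
  have "{..6::nat} = {0, 1, 2, 3, 4, 5, 6}"
    by auto
  then have "(\<forall>j\<le>6. g (real j) = 0) \<longleftrightarrow> (\<forall>j\<in>{0, 1, 2, 3, 4, 5, 6::nat}. g (real j) = 0)"
    unfolding atMost_iff[symmetric] by (simp only: flip: Ball_def)
  then show ?thesis
    by (simp add: samples_def zero_prod_def)
qed

definition residual_map :: "bipoly \<Rightarrow> bipoly \<Rightarrow> bipoly \<Rightarrow> coeffs \<times> real \<Rightarrow> coeffs \<times> real" where
  "residual_map f2 f3 f4 z = (samples (residual f2 f3 f4 z), snd z)"

definition residual_map_deriv :: "bipoly \<Rightarrow> bipoly \<Rightarrow> coeffs \<times> real \<Rightarrow> coeffs \<times> real \<Rightarrow> coeffs \<times> real" where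
  "residual_map_deriv f2 f4 z h = (samples (residual_deriv f2 f4 z h), snd h)"

lemma residual_map_has_derivative:
  "(residual_map f2 f3 f4 has_derivative residual_map_deriv f2 f4 z) (at z)"
  unfolding residual_map_def residual_map_deriv_def samples_def
  by (intro has_derivative_Pair residual_has_derivative has_derivative_snd has_derivative_ident)

lemma bounded_linear_residual_map_deriv: "bounded_linear (residual_map_deriv f2 f4 z)"
  using residual_map_has_derivative by (rule has_derivative_bounded_linear)

lemma continuous_on_residual_map_deriv: "continuous_on UNIV (\<lambda>z. residual_map_deriv f2 f4 z h)"
  unfolding residual_map_deriv_def samples_def residual_deriv_def xi_at_def eta_at_def case_prod_beta
  by (intro continuous_intros)

lemma form_residual:
  assumes "form_of_deg 2 f2" "form_of_deg 3 f3" "form_of_deg 4 f4" "form_of_deg 2 \<xi>" "form_of_deg 3 \<eta>"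
  shows "form_of_deg 6 (\<eta>\<^sup>2 + f3\<^sup>2 - (f2 - bconst t * \<xi>) * (bconst 4 * f4 - \<xi>\<^sup>2))"
proof -
  have "form_of_deg (2 + 4) ((f2 - bconst t * \<xi>) * (bconst 4 * f4 - \<xi>\<^sup>2))"
    using assms form_power2[of 2 \<xi>]
    by (intro form_mult form_diff form_bconst_mult) simp_all
  then show ?thesis
    using form_power2[OF assms(5)] form_power2[OF assms(2)] by (intro form_diff form_add) simp_all
qed

lemma identity_if_samples_vanish:
  assumes "form_of_deg 2 f2" "form_of_deg 3 f3" "form_of_deg 4 f4"
    and "samples (residual f2 f3 f4 (v, t)) = 0"
  shows "(eta_form v)\<^sup>2 + f3\<^sup>2 = (f2 - bconst t * xi_form v) * (bconst 4 * f4 - (xi_form v)\<^sup>2)"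
proof -
  have "(eta_form v)\<^sup>2 + f3\<^sup>2 - (f2 - bconst t * xi_form v) * (bconst 4 * f4 - (xi_form v)\<^sup>2) = 0"
    by (rule form_eq_0_if_vanishes[OF form_residual[OF assms(1-3) form_xi_form form_eta_form]])
      (use assms(4) in \<open>simp add: ev2_residual samples_eq_0_iff del: ev2_add ev2_diff\<close>)
  then show ?thesis
    by simp
qed

lemma residual_map_deriv_injective:
  assumes f2: "form_of_deg 2 f2" and \<xi>0: "form_of_deg 2 \<xi>0" and \<eta>0: "form_of_deg 3 \<eta>0"
    and kernel: "\<And>A B. form_of_deg 2 A \<Longrightarrow> form_of_deg 3 B \<Longrightarrow> \<eta>0 * B + f2 * \<xi>0 * A = 0 \<Longrightarrow> A = 0 \<and> B = 0"
    and "residual_map_deriv f2 f4 (coeffs_of \<xi>0 \<eta>0, 0) h = 0"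
  shows "h = 0"
proof -
  define A B where "A = xi_form (fst h)" and "B = eta_form (fst h)"
  have A: "form_of_deg 2 A" and B: "form_of_deg 3 B"
    by (simp_all add: A_def B_def form_xi_form form_eta_form)
  have "snd h = 0" and samples: "samples (residual_deriv f2 f4 (coeffs_of \<xi>0 \<eta>0, 0) h) = 0"
    using assms(5) by (simp_all add: residual_map_deriv_def zero_prod_def)
  have "xi_at (coeffs_of \<xi>0 \<eta>0) y = ev2 \<xi>0 1 y" "eta_at (coeffs_of \<xi>0 \<eta>0) y = ev2 \<eta>0 1 y" for y
    by (simp_all flip: ev2_xi_form ev2_eta_form add: xi_form_coeffs_of[OF \<xi>0] eta_form_coeffs_of[OF \<eta>0])
  then have "2 * ev2 (\<eta>0 * B + f2 * \<xi>0 * A) 1 y = residual_deriv f2 f4 (coeffs_of \<xi>0 \<eta>0, 0) h y" for y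
    using \<open>snd h = 0\<close> by (simp add: residual_deriv_def A_def B_def ev2_xi_form ev2_eta_form algebra_simps)
  moreover have "residual_deriv f2 f4 (coeffs_of \<xi>0 \<eta>0, 0) h (real j) = 0" if "j \<le> 6" for j
    using samples that by (simp add: samples_eq_0_iff)
  ultimately have "ev2 (\<eta>0 * B + f2 * \<xi>0 * A) 1 (real j) = 0" if "j \<le> 6" for j
    using that by (metis mult_eq_0_iff zero_neq_numeral)
  moreover have "form_of_deg 6 (\<eta>0 * B + f2 * \<xi>0 * A)"
    using form_mult[OF \<eta>0 B] form_mult[OF form_mult[OF f2 \<xi>0] A] by (intro form_add) simp_all
  ultimately have "\<eta>0 * B + f2 * \<xi>0 * A = 0"
    using form_eq_0_if_vanishes by blast
  then have "fst h = 0"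
    using kernel[OF A B] by (simp add: coeffs_eq_0_iff A_def B_def)
  then show "h = 0"
    using \<open>snd h = 0\<close> by (simp add: prod_eq_iff)
qed

lemma identity_curve:
  assumes f2: "form_of_deg 2 f2" and f3: "form_of_deg 3 f3" and f4: "form_of_deg 4 f4"
    and \<xi>0: "form_of_deg 2 \<xi>0" and \<eta>0: "form_of_deg 3 \<eta>0"
    and eq: "\<eta>0\<^sup>2 + f2 * \<xi>0\<^sup>2 = bconst 4 * f2 * f4 - f3\<^sup>2"
    and kernel: "\<And>A B. form_of_deg 2 A \<Longrightarrow> form_of_deg 3 B \<Longrightarrow> \<eta>0 * B + f2 * \<xi>0 * A = 0 \<Longrightarrow> A = 0 \<and> B = 0"
  obtains \<delta> x where "0 < \<delta>" "continuous_on {-\<delta><..<\<delta>} x"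
    "xi_form (x 0) = \<xi>0" "eta_form (x 0) = \<eta>0"
    "\<And>t. \<bar>t\<bar> < \<delta> \<Longrightarrow>
       (eta_form (x t))\<^sup>2 + f3\<^sup>2 = (f2 - bconst t * xi_form (x t)) * (bconst 4 * f4 - (xi_form (x t))\<^sup>2)"
proof -
  define v0 where "v0 = coeffs_of \<xi>0 \<eta>0"
  define D where "D z = Blinfun (residual_map_deriv f2 f4 z)" for z
  have D: "blinfun_apply (D z) = residual_map_deriv f2 f4 z" for z
    by (simp add: D_def bounded_linear_Blinfun_apply[OF bounded_linear_residual_map_deriv])
  have "(eta_form v0)\<^sup>2 + f3\<^sup>2 - (f2 - bconst 0 * xi_form v0) * (bconst 4 * f4 - (xi_form v0)\<^sup>2) = 0"
    using eq by (simp add: v0_def xi_form_coeffs_of[OF \<xi>0] eta_form_coeffs_of[OF \<eta>0] bconst_def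
        algebra_simps)
  then have "residual f2 f3 f4 (v0, 0) y = 0" for y
    by (metis ev2_0 ev2_residual)
  then have zero0: "residual_map f2 f3 f4 (v0, 0) = (0, 0)"
    by (simp add: residual_map_def samples_eq_0_iff)
  have der: "(residual_map f2 f3 f4 has_derivative blinfun_apply (D z)) (at z)" for z
    unfolding D by (rule residual_map_has_derivative)
  have cont: "continuous_on UNIV D"
    by (rule continuous_on_blinfun_componentwise) (simp add: D continuous_on_residual_map_deriv)
  have snd: "snd (residual_map f2 f3 f4 z) = snd z" for z
    by (simp add: residual_map_def)
  have inj: "h = 0" if "blinfun_apply (D (v0, 0)) h = 0" for h
    using residual_map_deriv_injective[OF f2 \<xi>0 \<eta>0 kernel that[unfolded D v0_def]] .
  obtain \<delta> x where "0 < \<delta>" "continuous_on {-\<delta><..<\<delta>} x" "x 0 = v0"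
    and zero: "\<And>t. \<bar>t\<bar> < \<delta> \<Longrightarrow> fst (residual_map f2 f3 f4 (x t, t)) = 0"
    using implicit_function_curve[OF der cont snd zero0 inj] by blast
  show ?thesis
  proof (rule that[OF \<open>0 < \<delta>\<close> \<open>continuous_on {-\<delta><..<\<delta>} x\<close>])
    show "xi_form (x 0) = \<xi>0" "eta_form (x 0) = \<eta>0"
      using \<open>x 0 = v0\<close> by (simp_all add: v0_def xi_form_coeffs_of[OF \<xi>0] eta_form_coeffs_of[OF \<eta>0])
    fix t :: real
    assume "\<bar>t\<bar> < \<delta>"
    then show "(eta_form (x t))\<^sup>2 + f3\<^sup>2
        = (f2 - bconst t * xi_form (x t)) * (bconst 4 * f4 - (xi_form (x t))\<^sup>2)"
      using zero[of t] by (intro identity_if_samples_vanish[OF f2 f3 f4])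
        (simp add: residual_map_def)
  qed
qed

section \<open>Positivity for small parameters\<close>

lemma psd2_coeff_z2_if_psd:
  assumes "\<forall>x y z. evf f2 f3 f4 x y z - z ^ 4 \<ge> 0"
  shows "psd2 f2"
  unfolding psd2_def
proof (intro allI)
  fix x y
  have "0 \<le> ev2 f2 x y * z\<^sup>2 + ev2 f3 x y * z + ev2 f4 x y" for z
    using assms[rule_format, of x y z] by (simp add: evf_def)
  then show "0 \<le> ev2 f2 x y"
    by (rule nonneg_quadratic_leading_coeff_nonneg)
qed

lemma ev2_pos_if_coercive:
  assumes "0 < m" "\<And>x y. m * (x\<^sup>2 + y\<^sup>2) \<le> ev2 p x y" "(x, y) \<noteq> (0, 0)"
  shows "0 < ev2 p x y"
proof -
  have "0 < x\<^sup>2 + y\<^sup>2"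
    using assms(3) by (auto simp: sum_power2_gt_zero_iff)
  then show ?thesis
    using mult_pos_pos[OF assms(1) \<open>0 < x\<^sup>2 + y\<^sup>2\<close>] assms(2)[of x y] by linarith
qed

lemma ev2_perturbation_ge:
  assumes "\<And>x y. m * (x\<^sup>2 + y\<^sup>2) \<le> ev2 f x y" "\<And>x y. \<bar>ev2 g x y\<bar> \<le> M * (x\<^sup>2 + y\<^sup>2)"
  shows "(m - \<bar>t\<bar> * M) * (x\<^sup>2 + y\<^sup>2) \<le> ev2 (f - bconst t * g) x y"
proof -
  have "t * ev2 g x y \<le> \<bar>t\<bar> * \<bar>ev2 g x y\<bar>"
    using abs_ge_self[of "t * ev2 g x y"] by (simp add: abs_mult)
  also have "\<dots> \<le> \<bar>t\<bar> * (M * (x\<^sup>2 + y\<^sup>2))"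
    by (rule mult_left_mono[OF assms(2)]) simp
  finally show ?thesis
    using assms(1)[of x y] by (simp add: algebra_simps)
qed

lemma psd2_factor_of_sum_squares:
  assumes "a\<^sup>2 + b\<^sup>2 = p * q" "form_of_deg j q" "0 < j"
    and "\<And>x y. (x, y) \<noteq> (0, 0) \<Longrightarrow> 0 < ev2 p x y"
  shows "psd2 q"
  unfolding psd2_def
proof (intro allI)
  fix x y
  show "0 \<le> ev2 q x y"
  proof (cases "(x, y) = (0, 0)")
    case True
    then show ?thesis
      using ev2_form_origin[OF assms(2,3)] by simp
  next
    case False
    have "0 \<le> ev2 (a\<^sup>2 + b\<^sup>2) x y"
      by simp
    then have "0 \<le> ev2 p x y * ev2 q x y"
      by (simp only: assms(1) ev2_mult)
    then show ?thesis
      using assms(4)[OF False] by (simp add: zero_le_mult_iff)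
  qed
qed

lemma form2_family_bounded:
  fixes \<delta> :: real
  assumes "0 < \<delta>" and "\<And>t. form_of_deg 2 (\<xi> t)"
    and "\<And>k i. continuous_on {-\<delta><..<\<delta>} (\<lambda>t. bcoeff (\<xi> t) k i)"
  obtains M where "0 < M" "\<And>t x y. \<bar>t\<bar> \<le> \<delta> / 2 \<Longrightarrow> \<bar>ev2 (\<xi> t) x y\<bar> \<le> M * (x\<^sup>2 + y\<^sup>2)"
proof -
  define N where "N t = \<bar>bcoeff (\<xi> t) 2 0\<bar> + \<bar>bcoeff (\<xi> t) 1 1\<bar> + \<bar>bcoeff (\<xi> t) 0 2\<bar>" for t
  have "{-\<delta>/2..\<delta>/2} \<subseteq> {-\<delta><..<\<delta>}"
    using assms(1) by auto
  then have "continuous_on {-\<delta>/2..\<delta>/2} N"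
    unfolding N_def by (intro continuous_intros continuous_on_subset[OF assms(3)])
  moreover have "{-\<delta>/2..\<delta>/2} \<noteq> {}"
    using assms(1) by simp
  ultimately obtain s where "\<forall>t\<in>{-\<delta>/2..\<delta>/2}. N t \<le> N s"
    using continuous_attains_sup[OF compact_Icc] by blast
  have "\<bar>ev2 (\<xi> t) x y\<bar> \<le> (N s + 1) * (x\<^sup>2 + y\<^sup>2)" if "\<bar>t\<bar> \<le> \<delta> / 2" for t x y
  proof -
    have "t \<in> {-\<delta>/2..\<delta>/2}"
      using that abs_ge_self[of t] abs_ge_minus_self[of t] by simp
    then have "N t \<le> N s + 1"
      using \<open>\<forall>t\<in>{-\<delta>/2..\<delta>/2}. N t \<le> N s\<close> by fastforce
    then have "N t * (x\<^sup>2 + y\<^sup>2) \<le> (N s + 1) * (x\<^sup>2 + y\<^sup>2)"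
      by (rule mult_right_mono) simp
    then show ?thesis
      using abs_ev2_form2_le[OF assms(2), of t x y] by (simp add: N_def)
  qed
  moreover have "0 < N s + 1"
    by (simp add: N_def add_nonneg_pos)
  ultimately show ?thesis
    using that by blast
qed

lemma psd2_perturbed_factors:
  assumes f4: "form_of_deg 4 f4" and \<xi>: "form_of_deg 2 \<xi>" and "0 < m - \<bar>t\<bar> * M"
    and f2_ge: "\<And>x y. m * (x\<^sup>2 + y\<^sup>2) \<le> ev2 f2 x y"
    and \<xi>_le: "\<And>x y. \<bar>ev2 \<xi> x y\<bar> \<le> M * (x\<^sup>2 + y\<^sup>2)"
    and identity: "\<eta>\<^sup>2 + f3\<^sup>2 = (f2 - bconst t * \<xi>) * (bconst 4 * f4 - \<xi>\<^sup>2)"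
  shows "psd2 (f2 - bconst t * \<xi>)" "psd2 (bconst 4 * f4 - \<xi>\<^sup>2)"
proof -
  have P_ge: "(m - \<bar>t\<bar> * M) * (x\<^sup>2 + y\<^sup>2) \<le> ev2 (f2 - bconst t * \<xi>) x y" for x y
    by (rule ev2_perturbation_ge[OF f2_ge \<xi>_le])
  show "psd2 (f2 - bconst t * \<xi>)"
    unfolding psd2_def
  proof (intro allI)
    fix x y
    have "0 \<le> (m - \<bar>t\<bar> * M) * (x\<^sup>2 + y\<^sup>2)"
      using \<open>0 < m - \<bar>t\<bar> * M\<close> by simp
    then show "0 \<le> ev2 (f2 - bconst t * \<xi>) x y"
      using P_ge[of x y] by linarith
  qed
  have "form_of_deg 4 (bconst 4 * f4 - \<xi>\<^sup>2)"
    using form_power2[OF \<xi>] by (intro form_diff form_bconst_mult f4) simp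
  then show "psd2 (bconst 4 * f4 - \<xi>\<^sup>2)"
    using psd2_factor_of_sum_squares[OF identity _ _ ev2_pos_if_coercive[OF \<open>0 < m - \<bar>t\<bar> * M\<close> P_ge]]
    by simp
qed

theorem proposition4p4:
  fixes f2 f3 f4 \<xi>0 \<eta>0 :: bipoly
  assumes "form_of_deg 2 f2" and "form_of_deg 3 f3" and "form_of_deg 4 f4"
    and spd: "\<forall>x y z. (x, y, z) \<noteq> (0, 0, 0) \<longrightarrow> evf f2 f3 f4 x y z > 0"
    and psd: "\<forall>x y z. evf f2 f3 f4 x y z - z^4 \<ge> 0"
    and nsq: "\<not> (\<exists>g :: bipoly. f2 = g^2)"
    and ndvd: "\<not> f2 dvd f3"
    and sqf: "squarefree (bconst 4 * f2 * f4 - f3^2)"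
    and "form_of_deg 2 \<xi>0" and "form_of_deg 3 \<eta>0"
    and "\<eta>0^2 + f2 * \<xi>0^2 = bconst 4 * f2 * f4 - f3^2"
  shows "\<exists>\<epsilon>>0. \<exists>\<xi> \<eta> :: real \<Rightarrow> bipoly.
           (\<forall>k i. continuous_on {-\<epsilon><..<\<epsilon>} (\<lambda>t. bcoeff (\<xi> t) k i)) \<and>
           (\<forall>k i. continuous_on {-\<epsilon><..<\<epsilon>} (\<lambda>t. bcoeff (\<eta> t) k i)) \<and>
           \<xi> 0 = \<xi>0 \<and> \<eta> 0 = \<eta>0 \<and>
           (\<forall>t. \<bar>t\<bar> < \<epsilon> \<longrightarrow>
              form_of_deg 2 (\<xi> t) \<and> form_of_deg 3 (\<eta> t) \<and>
              (\<eta> t)^2 + f3^2 = (f2 - bconst t * \<xi> t) * (bconst 4 * f4 - (\<xi> t)^2) \<and>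
              psd2 (f2 - bconst t * \<xi> t) \<and> psd2 (bconst 4 * f4 - (\<xi> t)^2))"
proof -
  note f2 = assms(1) and f3 = assms(2) and f4 = assms(3) and \<xi>0 = assms(9) and \<eta>0 = assms(10)
    and eq = assms(11)
  obtain m where "0 < m" and f2_ge: "\<And>x y. m * (x\<^sup>2 + y\<^sup>2) \<le> ev2 f2 x y"
    using form2_coercive[OF f2 psd2_coeff_z2_if_psd[OF psd] nsq] by blast
  have "irreducible f2"
    by (rule form2_irreducible[OF f2 ev2_pos_if_coercive[OF \<open>0 < m\<close> f2_ge]])
  then have "prime_elem f2"
    by (rule irreducible_imp_prime_elem)
  obtain \<delta> x where "0 < \<delta>" and x_cont: "continuous_on {-\<delta><..<\<delta>} x"
    and x0: "xi_form (x 0) = \<xi>0" "eta_form (x 0) = \<eta>0" and identity: "\<And>t. \<bar>t\<bar> < \<delta> \<Longrightarrow>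
      (eta_form (x t))\<^sup>2 + f3\<^sup>2 = (f2 - bconst t * xi_form (x t)) * (bconst 4 * f4 - (xi_form (x t))\<^sup>2)"
    using identity_curve[OF f2 f3 f4 \<xi>0 \<eta>0 eq]
      linearization_kernel_trivial[OF \<open>prime_elem f2\<close> ndvd sqf \<xi>0 \<eta>0 eq] by blast
  obtain M where "0 < M"
    and \<xi>_le: "\<And>t x' y. \<bar>t\<bar> \<le> \<delta> / 2 \<Longrightarrow> \<bar>ev2 (xi_form (x t)) x' y\<bar> \<le> M * (x'\<^sup>2 + y\<^sup>2)"
    using form2_family_bounded[OF \<open>0 < \<delta>\<close> form_xi_form continuous_on_bcoeff_xi_form[OF x_cont]]
    by blast
  define \<epsilon> where "\<epsilon> = min (\<delta> / 2) (m / M)"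
  have "{-\<epsilon><..<\<epsilon>} \<subseteq> {-\<delta><..<\<delta>}"
    using \<open>0 < \<delta>\<close> by (auto simp: \<epsilon>_def)
  note x_cont_\<epsilon> = continuous_on_subset[OF x_cont this]
  show ?thesis
  proof (intro exI[of _ \<epsilon>] exI[of _ "\<lambda>t. xi_form (x t)", OF exI[of _ "\<lambda>t. eta_form (x t)"]]
      conjI allI impI)
    show "0 < \<epsilon>"
      using \<open>0 < \<delta>\<close> \<open>0 < m\<close> \<open>0 < M\<close> by (simp add: \<epsilon>_def)
    fix t :: real
    assume "\<bar>t\<bar> < \<epsilon>"
    then have "\<bar>t\<bar> \<le> \<delta> / 2" "\<bar>t\<bar> < \<delta>" "0 < m - \<bar>t\<bar> * M"
      using \<open>0 < M\<close> by (auto simp: \<epsilon>_def less_divide_eq)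
    then show "psd2 (f2 - bconst t * xi_form (x t))" "psd2 (bconst 4 * f4 - (xi_form (x t))\<^sup>2)"
      using psd2_perturbed_factors[OF f4 form_xi_form _ f2_ge \<xi>_le identity] by blast+
  qed (use x0 x_cont_\<epsilon> identity in \<open>auto simp: \<epsilon>_def form_xi_form form_eta_form
    continuous_on_bcoeff_xi_form continuous_on_bcoeff_eta_form\<close>)
qed

end
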